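(* Let $d=2$, use polar coordinates $(r,\varphi)$ on $\mathbb{R}^2$, and let $V$ be a real-valued function on $B_1^c:=\{x\in\mathbb{R}^2:|x|>1\}$. For $u\in C_0^\infty(B_1^c)$ let $\psi(r,\varphi) := r^{-1/2}u(e^r,\varphi)$ for $r>0$. Then $$\int_{B_1^c}\overline{u}\,\big(-\Delta_{\mathbb{R}^2}u + Vu\big)\,dx = \int_0^\infty\!\!\int_0^{2\pi}\overline{\psi}\Big( -\frac1r\partial_r(r\partial_r\psi) - \partial_\varphi^2\psi + \frac{1}{4r^2}\psi + e^{2r}V(e^{r},\varphi)\psi \Big)\,r\,d\varphi\,dr,$$ i.e. $\langle u,(-\Delta+V)u\rangle_{L^2(B_1^c)} = \langle \psi, ( -\Delta_{\mathbb{R}^2} -(1 - r^{-2})\frac{d^2}{d\varphi^2} + \frac{1}{4r^2} + e^{2r}V(e^{r},\varphi) ) \psi \rangle_{L^2(\mathbb{R}^2)}$. Consequently, if $V(x) = -\frac{1}{4|x|^2(\ln |x|)^2} + W(x)$ with $W$ real-valued, then for all $u \in C_0^\infty(B_1^c)$ $$\Big\langle u, \Big( -\Delta_{\mathbb{R}^2} - \frac{1}{4r^2(\ln r)^2} + W \Big) u \Big\rangle_{L^2(B_1^c)} = \int_0^\infty\!\!\int_0^{2\pi}\overline{\psi}\Big( -\frac1r\partial_r(r\partial_r\psi) - \partial_\varphi^2\psi + e^{2r}W(e^{r},\varphi)\psi \Big)\,r\,d\varphi\,dr .$$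
   Context: $\langle f,g\rangle=\int\bar f g$. In the right-hand side, $-\Delta_{\mathbb{R}^2}-(1-r^{-2})\frac{d^2}{d\varphi^2}$ equals $-\frac1r\partial_r r\partial_r - \partial_\varphi^2$ in polar coordinates. *)

theory Defs
  imports "HOL-Analysis.Analysis"
begin

text \<open>The plane R^2 is modelled by the type complex (x + i y); lborel on complex is
  two-dimensional Lebesgue measure. Functions are complex-valued.\<close>

definition pdx :: "(complex \<Rightarrow> complex) \<Rightarrow> complex \<Rightarrow> complex" where
  "pdx f z = vector_derivative (\<lambda>t::real. f (z + of_real t)) (at 0)"

definition pdy :: "(complex \<Rightarrow> complex) \<Rightarrow> complex \<Rightarrow> complex" where
  "pdy f z = vector_derivative (\<lambda>t::real. f (z + \<i> * of_real t)) (at 0)"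

definition laplacian :: "(complex \<Rightarrow> complex) \<Rightarrow> complex \<Rightarrow> complex" where
  "laplacian f z = pdx (pdx f) z + pdy (pdy f) z"

text \<open>C^k regularity (real sense, as a map R^2 to C = R^2).\<close>
fun C_k :: "nat \<Rightarrow> (complex \<Rightarrow> complex) \<Rightarrow> bool" where
  "C_k 0 f = continuous_on UNIV f"
| "C_k (Suc k) f = ((\<forall>z. f differentiable (at z)) \<and> C_k k (pdx f) \<and> C_k k (pdy f))"

definition C_infty :: "(complex \<Rightarrow> complex) \<Rightarrow> bool" where
  "C_infty f \<longleftrightarrow> (\<forall>k. C_k k f)"

definition C0_infty_ext :: "(complex \<Rightarrow> complex) \<Rightarrow> bool" where
  "C0_infty_ext u \<longleftrightarrow> C_infty u \<and>
     (\<exists>K. compact K \<and> K \<subseteq> {z. cmod z > 1} \<and> (\<forall>z. z \<notin> K \<longrightarrow> u z = 0))"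

definition psi :: "(complex \<Rightarrow> complex) \<Rightarrow> real \<Rightarrow> real \<Rightarrow> complex" where
  "psi u r \<phi> = complex_of_real (r powr (-(1/2))) * u (rcis (exp r) \<phi>)"

definition pdr :: "(real \<Rightarrow> real \<Rightarrow> complex) \<Rightarrow> real \<Rightarrow> real \<Rightarrow> complex" where
  "pdr g r \<phi> = vector_derivative (\<lambda>s. g s \<phi>) (at r)"

definition pdphi :: "(real \<Rightarrow> real \<Rightarrow> complex) \<Rightarrow> real \<Rightarrow> real \<Rightarrow> complex" where
  "pdphi g r \<phi> = vector_derivative (\<lambda>s. g r s) (at \<phi>)"

end

theory Submission
  imports Defs
begin

text \<open>In the coordinates \<open>x = exp (Complex s t)\<close> the Lebesgue measure on \<open>{x. 1 < cmod x}\<close>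
  becomes \<open>exp (2 * s) ds dt\<close> on \<open>{0<..} \<times> [0, 2 * pi)\<close>. Differentiating \<open>u (exp (Complex s t))\<close>
  twice in \<open>s\<close> and twice in \<open>t\<close> gives the second derivatives of \<open>u\<close> along the flows
  \<open>z \<mapsto> e^\<tau> z\<close> and \<open>z \<mapsto> e^(i \<tau>) z\<close>, and these add up to \<open>|x|\<^sup>2 \<Delta>u = e^(2 s) \<Delta>u\<close>.
  Writing \<open>f s = u (exp (Complex s t)) = sqrt s * psi s\<close>, one has
  \<open>- (1/s) (s psi')' + psi / (4 s\<^sup>2) = - f'' / sqrt s\<close>, so after the change of variables the two
  integrands agree pointwise. In the second identity the Hardy weight
  \<open>- 1 / (4 |x|\<^sup>2 (ln |x|)\<^sup>2)\<close>, multiplied by the Jacobian \<open>e^(2 s)\<close>, is \<open>- 1 / (4 s\<^sup>2)\<close>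
  and cancels the potential produced by the substitution.\<close>

section \<open>Derivatives along rotation--dilation flows\<close>

definition dirderiv :: "(complex \<Rightarrow> complex) \<Rightarrow> complex \<Rightarrow> complex \<Rightarrow> complex" where
  "dirderiv f v z = of_real (Re v) * pdx f z + of_real (Im v) * pdy f z"

lemma has_derivative_dirderiv:
  fixes f :: "complex \<Rightarrow> complex"
  assumes "f differentiable (at z)"
  shows "(f has_derivative (\<lambda>v. dirderiv f v z)) (at z)"
proof -
  obtain D where D: "(f has_derivative D) (at z)"
    using assms by (auto simp: differentiable_def)
  have partial: "vector_derivative (\<lambda>t::real. f (z + of_real t * v)) (at 0) = D v" for v
  proof -
    have line: "((\<lambda>t::real. z + of_real t * v) has_vector_derivative v) (at 0)"
    proof -
      have "((\<lambda>t::real. of_real t) has_vector_derivative (1::complex)) (at 0)"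
        using has_vector_derivative_of_real[OF DERIV_ident] by simp
      from has_vector_derivative_add[OF has_vector_derivative_const has_vector_derivative_mult_left[OF this]]
      show ?thesis by simp
    qed
    have "(f has_derivative D) (at ((\<lambda>t::real. z + of_real t * v) 0))"
      using D by simp
    from vector_derivative_diff_chain_within[OF line has_derivative_at_withinI[OF this]]
    show ?thesis by (simp add: vector_derivative_at o_def)
  qed
  have "D = (\<lambda>v. dirderiv f v z)"
  proof
    fix v
    have "pdx f z = D 1" "pdy f z = D \<i>"
      using partial[of 1] partial[of \<i>] by (simp_all add: pdx_def pdy_def mult.commute)
    have "D v = D (Re v *\<^sub>R 1 + Im v *\<^sub>R \<i>)"
      by (metis complex_eq scaleR_conv_of_real mult.right_neutral mult.commute)
    also have "\<dots> = Re v *\<^sub>R D 1 + Im v *\<^sub>R D \<i>"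
      using has_derivative_linear[OF D] by (simp add: linear_add linear_scale)
    finally show "D v = dirderiv f v z"
      by (simp add: dirderiv_def scaleR_conv_of_real \<open>pdx f z = D 1\<close> \<open>pdy f z = D \<i>\<close>)
  qed
  with D show ?thesis by simp
qed

lemma has_vector_derivative_comp_dirderiv:
  assumes "\<And>z. f differentiable (at z)" and "(g has_vector_derivative g') (at x within S)"
  shows "((\<lambda>x. f (g x)) has_vector_derivative dirderiv f g' (g x)) (at x within S)"
  using vector_derivative_diff_chain_within[OF assms(2)
      has_derivative_at_withinI[OF has_derivative_dirderiv[OF assms(1)]]]
  by (simp add: o_def)

lemma C_k_2_differentiable:
  assumes "C_k 2 u"
  shows "u differentiable (at z)" "pdx u differentiable (at z)" "pdy u differentiable (at z)"
  using assms by (simp_all add: numeral_2_eq_2)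

text \<open>\<open>flow_deriv2 u c z\<close> is the second derivative of \<open>\<tau> \<mapsto> u (exp (c * \<tau>) * z)\<close> at \<open>\<tau> = 0\<close>.\<close>

definition flow_deriv2 :: "(complex \<Rightarrow> complex) \<Rightarrow> complex \<Rightarrow> complex \<Rightarrow> complex" where
  "flow_deriv2 u c z = dirderiv u (c * c * z) z
     + of_real (Re (c * z)) * dirderiv (pdx u) (c * z) z
     + of_real (Im (c * z)) * dirderiv (pdy u) (c * z) z"

lemma has_vector_derivative_dirderiv_flow:
  assumes u: "C_k 2 u" and g: "(g has_vector_derivative c * g x) (at x within S)"
  shows "((\<lambda>x. dirderiv u (c * g x) (g x)) has_vector_derivative flow_deriv2 u c (g x)) (at x within S)"
proof -
  have cg: "((\<lambda>x. c * g x) has_vector_derivative c * c * g x) (at x within S)"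
    using has_vector_derivative_mult_right[OF g, of c] by (simp add: mult.assoc)
  have "((\<lambda>x. of_real (Re (c * g x)) * pdx u (g x) + of_real (Im (c * g x)) * pdy u (g x))
      has_vector_derivative
        of_real (Re (c * g x)) * dirderiv (pdx u) (c * g x) (g x) + of_real (Re (c * c * g x)) * pdx u (g x)
      + (of_real (Im (c * g x)) * dirderiv (pdy u) (c * g x) (g x) + of_real (Im (c * c * g x)) * pdy u (g x)))
      (at x within S)"
    by (intro has_vector_derivative_add has_vector_derivative_mult
        has_vector_derivative_of_real has_field_derivative_Re has_field_derivative_Im cg
        has_vector_derivative_comp_dirderiv[OF C_k_2_differentiable(2)[OF u] g]
        has_vector_derivative_comp_dirderiv[OF C_k_2_differentiable(3)[OF u] g])
  then show ?thesis
    by (simp add: dirderiv_def flow_deriv2_def algebra_simps)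
qed

lemma flow_deriv2_sum_eq_laplacian:
  "flow_deriv2 u 1 z + flow_deriv2 u \<i> z = of_real ((cmod z)\<^sup>2) * laplacian u z"
proof -
  have "flow_deriv2 u 1 z + flow_deriv2 u \<i> z
      = (of_real (Re z) * of_real (Re z) + of_real (Im z) * of_real (Im z)) * laplacian u z"
    unfolding flow_deriv2_def dirderiv_def laplacian_def by (simp add: algebra_simps)
  also have "\<dots> = of_real ((cmod z)\<^sup>2) * laplacian u z"
    by (subst cmod_power2) (simp only: power2_eq_square of_real_add of_real_mult)
  finally show ?thesis .
qed

section \<open>The quadratic form in logarithmic polar coordinates\<close>

lemma radial_part_half_power_substitution:
  fixes f f' f'' :: "real \<Rightarrow> complex"
  assumes f: "\<And>s. 0 < s \<Longrightarrow> (f has_vector_derivative f' s) (at s)"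
    and f': "\<And>s. 0 < s \<Longrightarrow> (f' has_vector_derivative f'' s) (at s)"
    and r: "0 < r"
  shows "- (1 / of_real r) * vector_derivative
             (\<lambda>s. of_real s * vector_derivative (\<lambda>s. of_real (s powr - (1/2)) * f s) (at s)) (at r)
         + of_real (1 / (4 * r\<^sup>2)) * (of_real (r powr - (1/2)) * f r)
       = - of_real (r powr - (1/2)) * f'' r"
proof -
  have powr_eq: "s powr - (1/2) = 1 / sqrt s" if "0 < s" for s :: real
    using that by (simp add: powr_minus_divide powr_half_sqrt)
  have first: "vector_derivative (\<lambda>s. of_real (s powr - (1/2)) * f s) (at s)
      = of_real (1 / sqrt s) * f' s + of_real (- 1 / (2 * s * sqrt s)) * f s" if s: "0 < s" for s
  proof -
    have "((\<lambda>x. of_real (1 / sqrt x) * f x) has_vector_derivative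
        of_real (1 / sqrt s) * f' s + of_real (- 1 / (2 * s * sqrt s)) * f s) (at s)"
      using s by (intro has_vector_derivative_mult has_vector_derivative_of_real f)
        (auto intro!: derivative_eq_intros simp: field_simps)
    then have "((\<lambda>x. of_real (x powr - (1/2)) * f x) has_vector_derivative
        of_real (1 / sqrt s) * f' s + of_real (- 1 / (2 * s * sqrt s)) * f s) (at s)"
      by (rule has_vector_derivative_transform_within_open[where S = "{0<..}"])
        (use s in \<open>auto simp: powr_eq\<close>)
    then show ?thesis by (rule vector_derivative_at)
  qed
  have "((\<lambda>x. of_real (sqrt x) * f' x - of_real (1 / (2 * sqrt x)) * f x) has_vector_derivative
      (of_real (sqrt r) * f'' r + of_real (1 / (2 * sqrt r)) * f' r)
      - (of_real (1 / (2 * sqrt r)) * f' r + of_real (- 1 / (4 * r * sqrt r)) * f r)) (at r)"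
    using r by (intro has_vector_derivative_diff has_vector_derivative_mult has_vector_derivative_of_real f f')
      (auto intro!: derivative_eq_intros simp: field_simps)
  then have scaled: "((\<lambda>x. of_real (sqrt x) * f' x - of_real (1 / (2 * sqrt x)) * f x)
      has_vector_derivative of_real (sqrt r) * f'' r + of_real (1 / (4 * r * sqrt r)) * f r) (at r)"
    by (rule has_vector_derivative_eq_rhs) (simp add: algebra_simps)
  have agree: "of_real (sqrt x) * f' x - of_real (1 / (2 * sqrt x)) * f x
      = of_real x * vector_derivative (\<lambda>s. of_real (s powr - (1/2)) * f s) (at x)" if "x \<in> {0<..}" for x
  proof -
    from that have x: "0 < x" by simp
    have "(of_real (sqrt x) :: complex) * of_real (sqrt x) = of_real x"
      using x by (simp flip: of_real_mult)
    then show ?thesis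
      unfolding first[OF x] using x by (simp add: field_simps)
  qed
  have "((\<lambda>x. of_real x * vector_derivative (\<lambda>s. of_real (s powr - (1/2)) * f s) (at x))
      has_vector_derivative of_real (sqrt r) * f'' r + of_real (1 / (4 * r * sqrt r)) * f r) (at r)"
    by (rule has_vector_derivative_transform_within_open[OF scaled open_greaterThan _ agree])
      (use r in simp)
  then have second: "vector_derivative
      (\<lambda>s. of_real s * vector_derivative (\<lambda>s. of_real (s powr - (1/2)) * f s) (at s)) (at r)
      = of_real (sqrt r) * f'' r + of_real (1 / (4 * r * sqrt r)) * f r"
    by (rule vector_derivative_at)
  have "(of_real (sqrt r) :: complex) * of_real (sqrt r) = of_real r"
    using r by (simp flip: of_real_mult)
  then show ?thesis
    unfolding second powr_eq[OF r] using r by (simp add: field_simps power2_eq_square)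
qed

lemma rcis_exp_eq_exp_Complex: "rcis (exp s) t = exp (Complex s t)"
  by (simp add: rcis_def exp_eq_polar)

lemma has_vector_derivative_exp_Complex_fst:
  "((\<lambda>s. exp (Complex s t)) has_vector_derivative 1 * exp (Complex s t)) (at s within S)"
proof -
  have "((\<lambda>s. Complex s t) has_vector_derivative 1) (at s within S)"
    by (simp add: has_vector_derivative_complex_iff DERIV_ident)
  from vector_derivative_diff_chain_within[OF this
      has_derivative_at_withinI[OF DERIV_exp[unfolded has_field_derivative_def]]]
  show ?thesis by (simp add: o_def mult.commute)
qed

lemma has_vector_derivative_exp_Complex_snd:
  "((\<lambda>t. exp (Complex s t)) has_vector_derivative \<i> * exp (Complex s t)) (at t within S)"
proof -
  have "((\<lambda>t. Complex s t) has_vector_derivative \<i>) (at t within S)"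
    by (simp add: has_vector_derivative_complex_iff DERIV_ident)
  from vector_derivative_diff_chain_within[OF this
      has_derivative_at_withinI[OF DERIV_exp[unfolded has_field_derivative_def]]]
  show ?thesis by (simp add: o_def mult.commute)
qed

lemma psi_eq_exp_Complex: "psi u r \<phi> = of_real (r powr - (1/2)) * u (exp (Complex r \<phi>))"
  by (simp add: psi_def rcis_exp_eq_exp_Complex)

lemma pdphi_pdphi_psi:
  assumes "C_k 2 u"
  shows "pdphi (pdphi (psi u)) r \<phi> = of_real (r powr - (1/2)) * flow_deriv2 u \<i> (exp (Complex r \<phi>))"
proof -
  have first: "pdphi (psi u) r t
      = of_real (r powr - (1/2)) * dirderiv u (\<i> * exp (Complex r t)) (exp (Complex r t))" for t
    unfolding pdphi_def psi_eq_exp_Complex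
    by (intro vector_derivative_at has_vector_derivative_mult_right has_vector_derivative_comp_dirderiv
        C_k_2_differentiable(1)[OF assms] has_vector_derivative_exp_Complex_snd)
  show ?thesis
    unfolding pdphi_def[of "pdphi (psi u)"] first
    by (intro vector_derivative_at has_vector_derivative_mult_right has_vector_derivative_dirderiv_flow[OF assms]
        has_vector_derivative_exp_Complex_snd)
qed

lemma radial_part_psi:
  assumes "C_k 2 u" and "0 < r"
  shows "- (1 / of_real r) * pdr (\<lambda>s t. of_real s * pdr (psi u) s t) r \<phi>
           + of_real (1 / (4 * r\<^sup>2)) * psi u r \<phi>
         = - of_real (r powr - (1/2)) * flow_deriv2 u 1 (exp (Complex r \<phi>))"
  unfolding pdr_def psi_eq_exp_Complex
  by (intro radial_part_half_power_substitution[where f' = "\<lambda>s. dirderiv u (1 * exp (Complex s \<phi>)) (exp (Complex s \<phi>))"]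
      has_vector_derivative_comp_dirderiv C_k_2_differentiable(1)[OF assms(1)]
      has_vector_derivative_dirderiv_flow[OF assms(1)] has_vector_derivative_exp_Complex_fst assms(2))

lemma logpolar_quadratic_form_pointwise:
  fixes V :: "complex \<Rightarrow> real" and r \<phi> :: real
  assumes u: "C_k 2 u" and r: "0 < r"
  defines "z \<equiv> exp (Complex r \<phi>)"
  shows "cnj (psi u r \<phi>) *
           ( - (1 / of_real r) * pdr (\<lambda>s t. of_real s * pdr (psi u) s t) r \<phi>
             - pdphi (pdphi (psi u)) r \<phi>
             + of_real (1 / (4 * r\<^sup>2)) * psi u r \<phi>
             + of_real (exp (2 * r) * V (rcis (exp r) \<phi>)) * psi u r \<phi>) * of_real r
       = of_real (exp (2 * r)) * (cnj (u z) * (- laplacian u z + of_real (V z) * u z))"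
    (is "cnj _ * ?bracket * _ = of_real ?E * _")
proof -
  define a where "a = (of_real (r powr - (1/2)) :: complex)"
  have psi_at: "psi u r \<phi> = a * u z"
    by (simp add: psi_eq_exp_Complex a_def z_def)
  have laplacian: "flow_deriv2 u 1 z + flow_deriv2 u \<i> z = of_real ?E * laplacian u z"
    by (simp add: flow_deriv2_sum_eq_laplacian z_def power2_eq_square flip: exp_add mult_2)
  have "?bracket = (- (1 / of_real r) * pdr (\<lambda>s t. of_real s * pdr (psi u) s t) r \<phi>
        + of_real (1 / (4 * r\<^sup>2)) * psi u r \<phi>) - pdphi (pdphi (psi u)) r \<phi>
        + of_real ?E * of_real (V z) * psi u r \<phi>"
    by (simp add: rcis_exp_eq_exp_Complex z_def)
  also have "\<dots> = - a * flow_deriv2 u 1 z - a * flow_deriv2 u \<i> z + of_real ?E * of_real (V z) * (a * u z)"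
    unfolding radial_part_psi[OF u r] pdphi_pdphi_psi[OF u] unfolding psi_at by (simp add: a_def z_def)
  also have "\<dots> = a * (of_real ?E * (- laplacian u z + of_real (V z) * u z))"
    using laplacian by (simp add: algebra_simps flip: distrib_left)
  finally have bracket: "?bracket = a * (of_real ?E * (- laplacian u z + of_real (V z) * u z))" .
  have "a * a * of_real r = 1"
    using r by (simp add: a_def flip: of_real_mult powr_add)
  moreover have "cnj (a * u z) * (a * (e * X)) * of_real r = (a * a * of_real r) * (e * (cnj (u z) * X))" for e X
    by (simp add: a_def algebra_simps)
  ultimately show ?thesis
    unfolding bracket unfolding psi_at by (simp only: mult_1_left)
qed

section \<open>Change of variables to logarithmic polar coordinates\<close>

text \<open>The change of variables theorem of HOL-Analysis is stated for \<open>real^'n\<close>; these coordinate maps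
  transport it to \<open>complex\<close> and \<open>real \<times> real\<close>.\<close>

definition vec_of_complex :: "complex \<Rightarrow> real^2" where
  "vec_of_complex z = vector [Re z, Im z]"

definition complex_of_vec :: "real^2 \<Rightarrow> complex" where
  "complex_of_vec y = Complex (y$1) (y$2)"

definition pair_of_vec :: "real^2 \<Rightarrow> real \<times> real" where
  "pair_of_vec y = (y$1, y$2)"

lemma complex_of_vec_of_complex [simp]: "complex_of_vec (vec_of_complex z) = z"
  by (simp add: vec_of_complex_def complex_of_vec_def)

lemma vec_of_complex_of_vec [simp]: "vec_of_complex (complex_of_vec y) = y"
  by (simp add: vec_of_complex_def complex_of_vec_def vec_eq_iff forall_2)

lemma Re_complex_of_vec [simp]: "Re (complex_of_vec y) = y$1"
  and Im_complex_of_vec [simp]: "Im (complex_of_vec y) = y$2"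
  by (simp_all add: complex_of_vec_def)

lemma vec_of_complex_scale: "vec_of_complex (of_real r * z) = r *\<^sub>R vec_of_complex z"
  by (simp add: vec_of_complex_def vec_eq_iff forall_2)

lemma bounded_linear_complex_of_vec: "bounded_linear complex_of_vec"
  by (simp add: linear_conv_bounded_linear[symmetric] linearI complex_eq_iff)

lemma bounded_linear_vec_of_complex: "bounded_linear vec_of_complex"
  by (simp add: linear_conv_bounded_linear[symmetric] linearI vec_eq_iff forall_2 vec_of_complex_def)

lemma bounded_linear_pair_of_vec: "bounded_linear pair_of_vec"
  by (simp add: linear_conv_bounded_linear[symmetric] linearI pair_of_vec_def)

lemma borel_measurable_complex_of_vec [measurable]: "complex_of_vec \<in> borel_measurable borel"
  by (intro borel_measurable_continuous_onI linear_continuous_on bounded_linear_complex_of_vec)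

lemma borel_measurable_pair_of_vec [measurable]: "pair_of_vec \<in> borel_measurable borel"
  by (intro borel_measurable_continuous_onI linear_continuous_on bounded_linear_pair_of_vec)

lemma emeasure_lborel_box_vec2:
  fixes a b :: "real^2"
  assumes "a$1 \<le> b$1" "a$2 \<le> b$2"
  shows "emeasure lborel (box a b) = ennreal ((b$1 - a$1) * (b$2 - a$2))"
proof -
  have "cbox a b \<noteq> {}"
    using assms by (auto simp: mem_box_cart forall_2)
  then have "measure lborel (cbox a b) = (b$1 - a$1) * (b$2 - a$2)"
    by (simp add: content_cbox_cart UNIV_2)
  moreover have "emeasure lborel (box a b) = emeasure lborel (cbox a b)"
    by (simp add: emeasure_lborel_box_eq emeasure_lborel_cbox_eq)
  ultimately show ?thesis
    using emeasure_lborel_cbox_finite[of a b] by (simp add: emeasure_eq_ennreal_measure)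
qed

lemma box_vec2: "box (a::real^2) b = {y. a$1 < y$1 \<and> y$1 < b$1 \<and> a$2 < y$2 \<and> y$2 < b$2}"
  by (auto simp: mem_box_cart forall_2)

lemma distr_lborel_complex_of_vec: "distr lborel borel complex_of_vec = lborel"
proof (rule lborel_eqI[symmetric])
  fix l u :: complex
  assume le: "\<And>b. b \<in> Basis \<Longrightarrow> l \<bullet> b \<le> u \<bullet> b"
  have "Re l \<le> Re u" "Im l \<le> Im u"
    using le[of 1] le[of \<i>] by (auto simp: Basis_complex_def)
  moreover have "complex_of_vec -` box l u = box (vec_of_complex l) (vec_of_complex u)"
    by (auto simp: box_vec2 vec_of_complex_def mem_box Basis_complex_def)
  ultimately show "emeasure (distr lborel borel complex_of_vec) (box l u) = (\<Prod>b\<in>Basis. (u - l) \<bullet> b)"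
    by (simp add: emeasure_distr emeasure_lborel_box_vec2 vec_of_complex_def Basis_complex_def)
qed simp

lemma distr_lborel_pair_of_vec: "distr lborel borel pair_of_vec = lborel"
proof (rule lborel_eqI[symmetric])
  fix l u :: "real \<times> real"
  assume le: "\<And>b. b \<in> Basis \<Longrightarrow> l \<bullet> b \<le> u \<bullet> b"
  have "fst l \<le> fst u" "snd l \<le> snd u"
    using le[of "(1,0)"] le[of "(0,1)"] by (auto simp: Basis_prod_def inner_prod_def)
  moreover have "pair_of_vec -` box l u = box (vector [fst l, snd l]) (vector [fst u, snd u])"
    by (auto simp: box_vec2 pair_of_vec_def mem_box Basis_prod_def inner_prod_def)
  moreover have "(\<Prod>b\<in>Basis. (u - l) \<bullet> b) = (fst u - fst l) * (snd u - snd l)"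
    by (simp add: Basis_prod_def prod.union_disjoint inner_prod_def)
  ultimately show "emeasure (distr lborel borel pair_of_vec) (box l u) = (\<Prod>b\<in>Basis. (u - l) \<bullet> b)"
    by (simp add: emeasure_distr emeasure_lborel_box_vec2)
qed simp

lemma set_integral_measure_preserving:
  fixes h :: "'a::euclidean_space \<Rightarrow> 'b::euclidean_space" and F :: "'b \<Rightarrow> complex"
  assumes h: "distr lborel borel h = lborel" "h \<in> borel_measurable borel"
    and F: "(\<lambda>x. indicator A x *\<^sub>R F x) \<in> borel_measurable borel"
  shows "set_integrable lborel A F \<longleftrightarrow> set_integrable lborel (h -` A) (\<lambda>y. F (h y))"
    and "(LINT x:A|lborel. F x) = (LINT y:h -` A|lborel. F (h y))"
proof -
  have h_lborel: "h \<in> lborel \<rightarrow>\<^sub>M borel"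
    using h(2) by (simp add: measurable_lborel2)
  show "set_integrable lborel A F \<longleftrightarrow> set_integrable lborel (h -` A) (\<lambda>y. F (h y))"
    using integrable_distr_eq[OF h_lborel F]
    unfolding set_integrable_def h(1) by (simp add: indicator_vimage[symmetric])
  show "(LINT x:A|lborel. F x) = (LINT y:h -` A|lborel. F (h y))"
    using integral_distr[OF h_lborel F]
    unfolding set_lebesgue_integral_def h(1) by (simp add: indicator_vimage[symmetric])
qed

lemma set_integrable_lborel_iff_absolutely_integrable_on:
  fixes f :: "'a::euclidean_space \<Rightarrow> 'b::euclidean_space"
  assumes "(\<lambda>x. indicator S x *\<^sub>R f x) \<in> borel_measurable borel"
  shows "set_integrable lborel S f \<longleftrightarrow> f absolutely_integrable_on S"
  using assms unfolding absolutely_integrable_on_def set_integrable_def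
  by (simp add: measurable_lborel2 integrable_completion)

definition exp_vec :: "real^2 \<Rightarrow> real^2" where
  "exp_vec y = vec_of_complex (exp (complex_of_vec y))"

text \<open>The angle ranges over a half-open interval so that \<open>exp_vec\<close> is injective on the strip.\<close>

definition log_strip :: "(real^2) set" where
  "log_strip = {y. 0 < y$1 \<and> 0 \<le> y$2 \<and> y$2 < 2*pi}"

lemma has_derivative_exp_vec:
  "(exp_vec has_derivative (\<lambda>h. vec_of_complex (complex_of_vec h * exp (complex_of_vec y)))) (at y within S)"
proof -
  have "(exp has_derivative (\<lambda>h. exp (complex_of_vec y) * h)) (at (complex_of_vec y) within complex_of_vec ` S)"
    using DERIV_exp[of "complex_of_vec y"] unfolding has_field_derivative_def
    by (rule has_derivative_at_withinI)
  from diff_chain_within[OF bounded_linear_imp_has_derivative[OF bounded_linear_complex_of_vec] this]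
  have "(exp \<circ> complex_of_vec has_derivative (\<lambda>h. exp (complex_of_vec y) * h) \<circ> complex_of_vec) (at y within S)" .
  from diff_chain_within[OF this bounded_linear_imp_has_derivative[OF bounded_linear_vec_of_complex]]
  show ?thesis
    by (simp add: exp_vec_def[abs_def] o_def mult.commute)
qed

lemma abs_det_exp_vec:
  "\<bar>det (matrix (\<lambda>h. vec_of_complex (complex_of_vec h * exp (complex_of_vec y))))\<bar> = exp (2 * y$1)"
proof -
  have "complex_of_vec (axis 1 1) = 1" "complex_of_vec (axis 2 1) = \<i>"
    by (simp_all add: complex_of_vec_def axis_def complex_eq_iff)
  then have "det (matrix (\<lambda>h. vec_of_complex (complex_of_vec h * exp (complex_of_vec y))))
      = (Re (exp (complex_of_vec y)))\<^sup>2 + (Im (exp (complex_of_vec y)))\<^sup>2"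
    by (simp add: det_2 matrix_def vec_of_complex_def power2_eq_square axis_def)
  also have "\<dots> = (cmod (exp (complex_of_vec y)))\<^sup>2"
    by (rule cmod_power2[symmetric])
  also have "\<dots> = exp (2 * y$1)"
    by (simp add: norm_exp_eq_Re exp_double)
  finally show ?thesis by simp
qed

lemma inj_on_exp_vec: "inj_on exp_vec log_strip"
proof (rule inj_onI)
  fix x y assume x: "x \<in> log_strip" and y: "y \<in> log_strip" and "exp_vec x = exp_vec y"
  then have e: "exp (complex_of_vec x) = exp (complex_of_vec y)"
    by (metis complex_of_vec_of_complex exp_vec_def)
  have "exp (x$1) = exp (y$1)"
    using arg_cong[OF e, of cmod] by (simp add: norm_exp_eq_Re)
  moreover have "x$2 = y$2"
    using Arg2pi_exp[of "complex_of_vec x"] Arg2pi_exp[of "complex_of_vec y"] x y e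
    by (simp add: log_strip_def)
  ultimately show "x = y"
    by (simp add: vec_eq_iff forall_2)
qed

lemma exp_Complex_ln_Arg2pi:
  assumes "x \<noteq> 0"
  shows "exp (Complex (ln (cmod x)) (Arg2pi x)) = x"
proof -
  have "exp (Complex (ln (cmod x)) (Arg2pi x)) = of_real (exp (ln (cmod x))) * cis (Arg2pi x)"
    by (simp only: exp_eq_polar complex.sel)
  also have "\<dots> = of_real (cmod x) * exp (\<i> * of_real (Arg2pi x))"
    using assms by (auto simp: cis_conv_exp mult.commute)
  also have "\<dots> = x"
    using Arg2pi[of x] by (simp add: is_Arg_def)
  finally show ?thesis .
qed

lemma exp_vec_image_log_strip: "exp_vec ` log_strip = complex_of_vec -` {x. 1 < cmod x}"
proof
  show "exp_vec ` log_strip \<subseteq> complex_of_vec -` {x. 1 < cmod x}"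
    by (auto simp: exp_vec_def log_strip_def norm_exp_eq_Re)
  show "complex_of_vec -` {x. 1 < cmod x} \<subseteq> exp_vec ` log_strip"
  proof
    fix w assume "w \<in> complex_of_vec -` {x. 1 < cmod x}"
    then obtain x where x: "1 < cmod x" and w: "w = vec_of_complex x"
      by (metis mem_Collect_eq vec_of_complex_of_vec vimageE)
    define y where "y = vec_of_complex (Complex (ln (cmod x)) (Arg2pi x))"
    have "x \<noteq> 0"
      using x by auto
    then have "exp_vec y = w"
      by (simp add: exp_vec_def y_def w exp_Complex_ln_Arg2pi)
    moreover have "y \<in> log_strip"
      using x Arg2pi[of x] ln_gt_zero[of "cmod x"] by (simp add: y_def log_strip_def vec_of_complex_def)
    ultimately show "w \<in> exp_vec ` log_strip" by blast
  qed
qed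

lemma absolutely_integrable_on_vec_of_complex_iff:
  fixes G :: "real^2 \<Rightarrow> complex"
  shows "(\<lambda>y. vec_of_complex (G y)) absolutely_integrable_on A \<longleftrightarrow> G absolutely_integrable_on A"
proof
  assume "(\<lambda>y. vec_of_complex (G y)) absolutely_integrable_on A"
  from absolutely_integrable_linear[OF this bounded_linear_complex_of_vec]
  show "G absolutely_integrable_on A" by (simp add: o_def)
next
  assume "G absolutely_integrable_on A"
  from absolutely_integrable_linear[OF this bounded_linear_vec_of_complex]
  show "(\<lambda>y. vec_of_complex (G y)) absolutely_integrable_on A" by (simp add: o_def)
qed

lemma integral_vec_of_complex:
  fixes G :: "real^2 \<Rightarrow> complex"
  assumes "G absolutely_integrable_on A"
  shows "integral A (\<lambda>y. vec_of_complex (G y)) = vec_of_complex (integral A G)"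
  using integral_linear[OF set_lebesgue_integral_eq_integral(1)[OF assms] bounded_linear_vec_of_complex]
  by (simp add: o_def)

lemma exp_vec_change_of_variables:
  fixes F :: "complex \<Rightarrow> complex"
  defines "\<Omega> \<equiv> complex_of_vec -` {x. 1 < cmod x}"
  shows "(\<lambda>y. of_real (exp (2 * y$1)) * F (exp (complex_of_vec y))) absolutely_integrable_on log_strip
           \<longleftrightarrow> (\<lambda>y. F (complex_of_vec y)) absolutely_integrable_on \<Omega>" (is "?strip \<longleftrightarrow> ?disc")
    and "(\<lambda>y. F (complex_of_vec y)) absolutely_integrable_on \<Omega> \<Longrightarrow>
         integral log_strip (\<lambda>y. of_real (exp (2 * y$1)) * F (exp (complex_of_vec y)))
           = integral \<Omega> (\<lambda>y. F (complex_of_vec y))"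
proof -
  have "log_strip \<in> sets borel"
    unfolding log_strip_def by measurable
  then have "log_strip \<in> sets lebesgue" by simp
  note cov = has_absolute_integral_change_of_variables[OF this has_derivative_exp_vec inj_on_exp_vec,
      of "\<lambda>y. vec_of_complex (F (complex_of_vec y))", unfolded exp_vec_image_log_strip abs_det_exp_vec,
      folded \<Omega>_def]
  have "exp (2 * y$1) *\<^sub>R vec_of_complex (F (complex_of_vec (exp_vec y)))
      = vec_of_complex (of_real (exp (2 * y$1)) * F (exp (complex_of_vec y)))" for y
    by (simp add: exp_vec_def vec_of_complex_scale)
  note cov = cov[unfolded this]
  show "?strip \<longleftrightarrow> ?disc"
    using cov[of "integral \<Omega> (\<lambda>y. vec_of_complex (F (complex_of_vec y)))"]
      cov[of "integral log_strip (\<lambda>y. vec_of_complex (of_real (exp (2 * y$1)) * F (exp (complex_of_vec y))))"]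
    by (auto simp: absolutely_integrable_on_vec_of_complex_iff)
  assume ?disc
  with \<open>?strip \<longleftrightarrow> ?disc\<close> have ?strip ..
  have "vec_of_complex (integral log_strip (\<lambda>y. of_real (exp (2 * y$1)) * F (exp (complex_of_vec y))))
      = vec_of_complex (integral \<Omega> (\<lambda>y. F (complex_of_vec y)))"
    using cov[of "integral \<Omega> (\<lambda>y. vec_of_complex (F (complex_of_vec y)))"] \<open>?strip\<close> \<open>?disc\<close>
    by (auto simp: absolutely_integrable_on_vec_of_complex_iff integral_vec_of_complex)
  from arg_cong[OF this, of complex_of_vec]
  show "integral log_strip (\<lambda>y. of_real (exp (2 * y$1)) * F (exp (complex_of_vec y)))
      = integral \<Omega> (\<lambda>y. F (complex_of_vec y))"
    by (simp only: complex_of_vec_of_complex)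
qed

lemma borel_measurable_exp_Complex [measurable]:
  "(\<lambda>p::real \<times> real. exp (Complex (fst p) (snd p))) \<in> borel_measurable borel"
  unfolding Complex_eq by (intro borel_measurable_continuous_onI continuous_intros)

lemma borel_measurable_logpolar_pullback:
  fixes G :: "complex \<Rightarrow> complex"
  assumes G: "(\<lambda>x. indicator {x. 1 < cmod x} x *\<^sub>R G x) \<in> borel_measurable borel"
    and S: "S \<in> sets borel" "S \<subseteq> {p. 0 < fst p}"
  shows "(\<lambda>p. indicator S p *\<^sub>R (of_real (exp (2 * fst p)) * G (exp (Complex (fst p) (snd p)))))
           \<in> borel_measurable borel"
proof -
  have eq: "(\<lambda>p. indicator S p *\<^sub>R (of_real (exp (2 * fst p)) * G (exp (Complex (fst p) (snd p)))))
      = (\<lambda>p. indicator S p *\<^sub>R (of_real (exp (2 * fst p)) *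
          (indicator {x. 1 < cmod x} (exp (Complex (fst p) (snd p))) *\<^sub>R G (exp (Complex (fst p) (snd p))))))"
    using S(2) by (auto simp: fun_eq_iff indicator_def norm_exp_eq_Re)
  have composed: "(\<lambda>p. indicator {x. 1 < cmod x} (exp (Complex (fst p) (snd p))) *\<^sub>R G (exp (Complex (fst p) (snd p))))
      \<in> borel_measurable borel"
    using measurable_compose[OF borel_measurable_exp_Complex G] by simp
  have "(\<lambda>p::real \<times> real. of_real (exp (2 * fst p)) :: complex) \<in> borel_measurable borel"
    by (intro borel_measurable_continuous_onI continuous_intros)
  then show ?thesis
    unfolding eq by (intro borel_measurable_scaleR borel_measurable_times borel_measurable_indicator S(1) composed)
qed

lemma borel_measurable_Arg2pi [measurable]: "Arg2pi \<in> borel_measurable borel"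
  by (rule borel_measurableI_le) (simp add: closed_Arg2pi2pi_le)

lemma borel_measurable_logpolar_pushforward:
  fixes G :: "complex \<Rightarrow> complex"
  assumes "(\<lambda>p. indicator ({0<..} \<times> {0..2*pi}) p *\<^sub>R
             (of_real (exp (2 * fst p)) * G (exp (Complex (fst p) (snd p))))) \<in> borel_measurable borel"
    (is "(\<lambda>p. indicator ?D p *\<^sub>R ?H p) \<in> _")
  shows "(\<lambda>x. indicator {x. 1 < cmod x} x *\<^sub>R G x) \<in> borel_measurable borel"
proof -
  define L where "L x = (ln (cmod x), Arg2pi x)" for x
  have L_measurable [measurable]: "L \<in> borel_measurable borel"
    unfolding L_def by measurable
  have "indicator {x. 1 < cmod x} x *\<^sub>R G x
      = indicator {x. 1 < cmod x} x *\<^sub>R (of_real (inverse ((cmod x)\<^sup>2)) * (indicator ?D (L x) *\<^sub>R ?H (L x)))" for x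
  proof (cases "1 < cmod x")
    case True
    then have x: "x \<noteq> 0" by auto
    moreover have "exp (2 * ln (cmod x)) = (cmod x)\<^sup>2"
      using True by (auto simp: exp_double)
    ultimately have "?H (L x) = of_real ((cmod x)\<^sup>2) * G x"
      by (simp add: L_def exp_Complex_ln_Arg2pi)
    moreover have "L x \<in> ?D"
      using True Arg2pi[of x] ln_gt_zero[of "cmod x"] by (auto simp: L_def)
    ultimately show ?thesis
      using True x by (simp add: field_simps)
  qed (simp add: indicator_def)
  then have "(\<lambda>x. indicator {x. 1 < cmod x} x *\<^sub>R G x)
      = (\<lambda>x. indicator {x. 1 < cmod x} x *\<^sub>R (of_real (inverse ((cmod x)\<^sup>2)) * (indicator ?D (L x) *\<^sub>R ?H (L x))))"
    by (rule ext)
  also have "\<dots> \<in> borel_measurable borel"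
    using assms by measurable
  finally show ?thesis .
qed

lemma set_integral_logpolar_half_open_strip:
  fixes G :: "complex \<Rightarrow> complex"
  assumes G: "(\<lambda>x. indicator {x. 1 < cmod x} x *\<^sub>R G x) \<in> borel_measurable borel"
  shows "(LINT p:{0<..} \<times> {0..<2*pi}|lborel. of_real (exp (2 * fst p)) * G (exp (Complex (fst p) (snd p))))
       = (LINT x:{x. 1 < cmod x}|lborel. G x)"
proof -
  define D where "D = ({0<..} \<times> {0..<2*pi} :: (real \<times> real) set)"
  define H where "H = (\<lambda>p::real \<times> real. of_real (exp (2 * fst p)) * G (exp (Complex (fst p) (snd p))))"
  define \<Omega> where "\<Omega> = {x::complex. 1 < cmod x}"
  define F where "F = (\<lambda>y::real^2. of_real (exp (2 * y$1)) * G (exp (complex_of_vec y)))"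
  have "D \<in> sets (borel \<Otimes>\<^sub>M borel)"
    unfolding D_def by (rule pair_measureI) auto
  then have H_measurable: "(\<lambda>p. indicator D p *\<^sub>R H p) \<in> borel_measurable borel"
    unfolding H_def by (intro borel_measurable_logpolar_pullback G) (auto simp: D_def simp flip: borel_prod)
  have D_vimage: "pair_of_vec -` D = log_strip" and H_pair: "H \<circ> pair_of_vec = F"
    by (auto simp: D_def log_strip_def pair_of_vec_def H_def F_def complex_of_vec_def)
  note strip = set_integral_measure_preserving[OF distr_lborel_pair_of_vec borel_measurable_pair_of_vec
      H_measurable, unfolded D_vimage, unfolded comp_def[symmetric] H_pair]
  note disc = set_integral_measure_preserving[OF distr_lborel_complex_of_vec borel_measurable_complex_of_vec
      G[folded \<Omega>_def]]
  have "(\<lambda>y. indicator log_strip y *\<^sub>R F y) \<in> borel_measurable borel"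
    using measurable_compose[OF borel_measurable_pair_of_vec H_measurable]
    by (simp add: D_vimage[symmetric] H_pair[symmetric] indicator_vimage[symmetric] del: vimage_Collect_eq)
  note strip_abs = set_integrable_lborel_iff_absolutely_integrable_on[OF this]
  have "(\<lambda>y. indicator (complex_of_vec -` \<Omega>) y *\<^sub>R G (complex_of_vec y)) \<in> borel_measurable borel"
    using measurable_compose[OF borel_measurable_complex_of_vec G[folded \<Omega>_def]]
    by (simp add: indicator_vimage[symmetric] del: vimage_Collect_eq)
  note disc_abs = set_integrable_lborel_iff_absolutely_integrable_on[OF this]
  show ?thesis
  proof (cases "set_integrable lborel \<Omega> G")
    case True
    then have "(\<lambda>y. G (complex_of_vec y)) absolutely_integrable_on complex_of_vec -` \<Omega>"
      using disc(1) disc_abs by simp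
    moreover from this have "set_integrable lborel log_strip F"
      using strip_abs exp_vec_change_of_variables(1)[of G] by (simp add: F_def \<Omega>_def)
    ultimately have "(LINT y:log_strip|lborel. F y) = (LINT y:complex_of_vec -` \<Omega>|lborel. G (complex_of_vec y))"
      using exp_vec_change_of_variables(2)[of G] disc(1) True
      by (simp add: set_borel_integral_eq_integral F_def \<Omega>_def)
    then show ?thesis
      using strip(2) disc(2) by (simp add: D_def H_def \<Omega>_def)
  next
    case False
    then have "\<not> set_integrable lborel D H"
      using strip(1) strip_abs disc(1) disc_abs exp_vec_change_of_variables(1)[of G]
      by (simp add: F_def \<Omega>_def)
    then show ?thesis
      using False by (simp add: D_def H_def \<Omega>_def set_lebesgue_integral_def set_integrable_def
          not_integrable_integral_eq)
  qed
qed

lemma AE_lborel_closed_eq_half_open_strip: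
  "AE p in lborel. p \<in> {0<..} \<times> {0..<2*pi} \<longleftrightarrow> p \<in> ({0<..} \<times> {0..2*pi} :: (real \<times> real) set)"
proof (rule AE_I')
  have "emeasure (lborel \<Otimes>\<^sub>M lborel) (UNIV \<times> {2*pi}) = (0::ennreal)"
    by (simp add: lborel.emeasure_pair_measure_Times)
  then show "UNIV \<times> {2*pi} \<in> null_sets (lborel :: (real \<times> real) measure)"
    by (simp add: lborel_prod null_sets_def borel_closed closed_Times)
qed auto

text \<open>No integrability hypothesis is needed: if \<open>G\<close> is not integrable on the exterior of the disc,
  neither side is, and both integrals are \<open>0\<close>.\<close>

lemma set_integral_exterior_disc_logpolar:
  fixes G :: "complex \<Rightarrow> complex"
  shows "(LINT x:{x. 1 < cmod x}|lborel. G x)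
       = (LINT p:{0<..} \<times> {0..2*pi}|lborel. of_real (exp (2 * fst p)) * G (exp (Complex (fst p) (snd p))))"
    (is "_ = (LINT p:?D|lborel. ?H p)")
proof (cases "(\<lambda>x. indicator {x. 1 < cmod x} x *\<^sub>R G x) \<in> borel_measurable borel")
  case True
  have sets: "?D \<in> sets borel" "{0<..} \<times> {0..<2*pi} \<in> sets (borel :: (real \<times> real) measure)"
    by (simp_all add: borel_prod[symmetric] pair_measureI)
  have "(LINT p:?D|lborel. ?H p) = (LINT p:{0<..} \<times> {0..<2*pi}|lborel. ?H p)"
    using sets
    by (intro set_integral_cong_set AE_lborel_closed_eq_half_open_strip)
      (auto simp: set_borel_measurable_def measurable_lborel2 borel_prod
        intro!: borel_measurable_logpolar_pullback True)
  then show ?thesis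
    using set_integral_logpolar_half_open_strip[OF True] by simp
next
  case False
  then have "\<not> set_integrable lborel {x. 1 < cmod x} G"
    unfolding set_integrable_def using borel_measurable_integrable measurable_lborel2 by blast
  moreover have "\<not> set_integrable lborel ?D ?H"
    using False borel_measurable_logpolar_pushforward
    unfolding set_integrable_def using borel_measurable_integrable measurable_lborel2 by blast
  ultimately show ?thesis
    by (simp add: set_lebesgue_integral_def set_integrable_def not_integrable_integral_eq)
qed

lemma sets_lborel_polar_strip: "{0<..} \<times> {0..2*pi} \<in> sets (lborel :: (real \<times> real) measure)"
  by (simp add: borel_prod[symmetric] pair_measureI)

lemma quadratic_form_logpolar:
  fixes V :: "complex \<Rightarrow> real"
  assumes u: "C_k 2 u"
  shows "(LINT x:{x. cmod x > 1}|lborel. cnj (u x) * (- laplacian u x + of_real (V x) * u x))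
         = (LINT p:{0<..} \<times> {0..2*pi}|lborel. (case p of (r, \<phi>) \<Rightarrow>
              cnj (psi u r \<phi>) *
                ( - (1 / of_real r) * pdr (\<lambda>s t. of_real s * pdr (psi u) s t) r \<phi>
                  - pdphi (pdphi (psi u)) r \<phi>
                  + of_real (1 / (4 * r\<^sup>2)) * psi u r \<phi>
                  + of_real (exp (2 * r) * V (rcis (exp r) \<phi>)) * psi u r \<phi>) * of_real r))"
  unfolding set_integral_exterior_disc_logpolar
  by (rule set_lebesgue_integral_cong[OF sets_lborel_polar_strip])
    (auto simp only: mem_Times_iff greaterThan_iff fst_conv snd_conv prod.case
      intro!: logpolar_quadratic_form_pointwise[OF u, symmetric])

lemma hardy_weight_logpolar:
  fixes r \<phi> w :: real
  assumes "0 < r"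
  shows "of_real (1 / (4 * r\<^sup>2)) + of_real (exp (2 * r) *
           (- 1 / (4 * (cmod (rcis (exp r) \<phi>))\<^sup>2 * (ln (cmod (rcis (exp r) \<phi>)))\<^sup>2) + w))
         = (of_real (exp (2 * r) * w) :: complex)"
proof -
  have "exp (2 * r) = (exp r)\<^sup>2"
    by (rule exp_double)
  then have "1 / (4 * r\<^sup>2) + exp (2 * r) *
      (- 1 / (4 * (cmod (rcis (exp r) \<phi>))\<^sup>2 * (ln (cmod (rcis (exp r) \<phi>)))\<^sup>2) + w) = exp (2 * r) * w"
    using assms by (simp add: field_simps)
  then show ?thesis
    by (metis of_real_add)
qed

theorem proposition3p3:
  fixes u :: "complex \<Rightarrow> complex" and V W :: "complex \<Rightarrow> real"
  assumes "C0_infty_ext u"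
  shows "((LINT x:{x. cmod x > 1}|lborel. cnj (u x) * (- laplacian u x + of_real (V x) * u x))
         = (LINT p:{0<..} \<times> {0..2*pi}|lborel. (case p of (r, \<phi>) \<Rightarrow>
              cnj (psi u r \<phi>) *
                ( - (1 / of_real r) * pdr (\<lambda>s t. of_real s * pdr (psi u) s t) r \<phi>
                  - pdphi (pdphi (psi u)) r \<phi>
                  + of_real (1 / (4 * r\<^sup>2)) * psi u r \<phi>
                  + of_real (exp (2 * r) * V (rcis (exp r) \<phi>)) * psi u r \<phi>) * of_real r))
      \<and> (LINT x:{x. cmod x > 1}|lborel. cnj (u x) *
              (- laplacian u x
               + of_real (- 1 / (4 * (cmod x)\<^sup>2 * (ln (cmod x))\<^sup>2) + W x) * u x))
         = (LINT p:{0<..} \<times> {0..2*pi}|lborel. (case p of (r, \<phi>) \<Rightarrow>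
              cnj (psi u r \<phi>) *
                ( - (1 / of_real r) * pdr (\<lambda>s t. of_real s * pdr (psi u) s t) r \<phi>
                  - pdphi (pdphi (psi u)) r \<phi>
                  + of_real (exp (2 * r) * W (rcis (exp r) \<phi>)) * psi u r \<phi>) * of_real r)))"
proof -
  have u: "C_k 2 u"
    using assms by (simp add: C0_infty_ext_def C_infty_def)
  show ?thesis
    unfolding quadratic_form_logpolar[OF u]
    by (intro conjI refl set_lebesgue_integral_cong[OF sets_lborel_polar_strip])
      (auto simp only: mem_Times_iff greaterThan_iff fst_conv snd_conv prod.case add.assoc
        hardy_weight_logpolar simp flip: distrib_right)
qed

end
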